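(* Let $(X,\mathcal{F})$ be a measurable lamination admitting a regular foliated measurable atlas, and let $h:T\to T'$ be a measurable holonomy map between transversals. Then there exists a measurable homotopy $H:T\times\mathbb{R}\to X$ such that $H(t,0)=t$ and $H(t,1)=h(t)$ for all $t\in T$.
   Context: Measurable lamination: an MT-space (set with $\sigma$-algebra and topology) covered by countably many measurable open sets with MT-isomorphisms onto $B\times T$, $B$ an open ball in $\mathbb{R}^n$, $T$ standard Borel (product of Euclidean and discrete topologies, product $\sigma$-algebra); leaves are connected components. A foliated measurable atlas is regular if each chart $(U,\varphi)$ is the restriction of a chart $(W,\psi)$ with $\overline U\subset W$ and plaques of $U$ having compact closure, and each plaque of a chart meets at most one plaque of any other chart. A transversal is a measurable set meeting each leaf countably; a measurable holonomy map is a measurable isomorphism $h:T\to T'$ between transversals with $h(t)$ in the leaf of $t$. A measurable homotopy $T\times\mathbb{R}\to X$ is an MT-map (measurable, continuous) where $T\times\mathbb{R}$ has the topology of $\mathbb{R}$ on each $\{t\}\times\mathbb{R}$ and $T$ discrete. *)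

theory Defs
  imports "HOL-Analysis.Analysis" "HOL-Probability.Probability"
begin

definition MT_space :: "'a measure \<Rightarrow> 'a topology \<Rightarrow> bool" where
  "MT_space M Top \<longleftrightarrow> space M = topspace Top"

definition standard_borel :: "'b measure \<Rightarrow> bool" where
  "standard_borel T \<longleftrightarrow> (\<exists>\<tau>. topspace \<tau> = space T \<and> completely_metrizable_space \<tau>
       \<and> separable_space \<tau> \<and> sets T = sigma_sets (space T) {U. openin \<tau> U})"

definition model_topology :: "'e::euclidean_space set \<Rightarrow> 'b measure \<Rightarrow> ('e \<times> 'b) topology" where
  "model_topology B T = prod_topology (top_of_set B) (discrete_topology (space T))"

definition model_measure :: "'e::euclidean_space set \<Rightarrow> 'b measure \<Rightarrow> ('e \<times> 'b) measure" where
  "model_measure B T = restrict_space borel B \<Otimes>\<^sub>M T"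

definition fol_chart ::
  "'a measure \<Rightarrow> 'a topology \<Rightarrow> 'a set \<Rightarrow> ('a \<Rightarrow> 'e::euclidean_space \<times> 'b) \<Rightarrow> 'e set \<Rightarrow> 'b measure \<Rightarrow> bool" where
  "fol_chart M Top U \<phi> B T \<longleftrightarrow>
     U \<in> sets M \<and> openin Top U \<and>
     (\<exists>c r. r > 0 \<and> B = ball c r) \<and> standard_borel T \<and>
     bij_betw \<phi> U (B \<times> space T) \<and>
     \<phi> \<in> measurable (restrict_space M U) (model_measure B T) \<and>
     the_inv_into U \<phi> \<in> measurable (model_measure B T) (restrict_space M U) \<and>
     homeomorphic_map (subtopology Top U) (model_topology B T) \<phi>"

type_synonym ('a, 'e, 'b) chart = "'a set \<times> ('a \<Rightarrow> 'e \<times> 'b) \<times> 'e set \<times> 'b measure"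

definition is_chart :: "'a measure \<Rightarrow> 'a topology \<Rightarrow> ('a, 'e::euclidean_space, 'b) chart \<Rightarrow> bool" where
  "is_chart M Top c \<longleftrightarrow> (case c of (U, \<phi>, B, T) \<Rightarrow> fol_chart M Top U \<phi> B T)"

definition fol_atlas :: "'a measure \<Rightarrow> 'a topology \<Rightarrow> ('a, 'e::euclidean_space, 'b) chart set \<Rightarrow> bool" where
  "fol_atlas M Top A \<longleftrightarrow> (\<forall>c\<in>A. is_chart M Top c) \<and> (\<Union>c\<in>A. fst c) = space M"

text \<open>Measurable lamination of leaf dimension DIM('e): an MT-space covered by
  countably many foliated measurable charts.\<close>
definition measurable_lamination ::
  "'a measure \<Rightarrow> 'a topology \<Rightarrow> ('e::euclidean_space \<times> 'b) itself \<Rightarrow> bool" where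
  "measurable_lamination M Top _ \<longleftrightarrow> MT_space M Top \<and>
     (\<exists>A :: ('a, 'e, 'b) chart set. countable A \<and> fol_atlas M Top A)"

definition plaques :: "('a, 'e, 'b) chart \<Rightarrow> 'a set set" where
  "plaques c = (case c of (U, \<phi>, B, T) \<Rightarrow> (\<lambda>t. {x\<in>U. snd (\<phi> x) = t}) ` space T)"

definition regular_atlas :: "'a measure \<Rightarrow> 'a topology \<Rightarrow> ('a, 'e::euclidean_space, 'b) chart set \<Rightarrow> bool" where
  "regular_atlas M Top A \<longleftrightarrow> fol_atlas M Top A \<and>
     (\<forall>c\<in>A. (\<exists>W \<psi> B' T'. fol_chart M Top W \<psi> B' T' \<and>
                 fst c \<subseteq> W \<and> Top closure_of (fst c) \<subseteq> W \<and>
                 (\<forall>x\<in>fst c. fst (snd c) x = \<psi> x)) \<and>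
             (\<forall>P\<in>plaques c. compactin Top (Top closure_of P))) \<and>
     (\<forall>c\<in>A. \<forall>c'\<in>A. c \<noteq> c' \<longrightarrow> (\<forall>P\<in>plaques c. card {Q\<in>plaques c'. P \<inter> Q \<noteq> {}} \<le> 1
                                       \<and> finite {Q\<in>plaques c'. P \<inter> Q \<noteq> {}}))"

text \<open>Leaves are the connected components; a transversal is a measurable set
  meeting each leaf in a countable set.\<close>
definition transversal :: "'a measure \<Rightarrow> 'a topology \<Rightarrow> 'a set \<Rightarrow> bool" where
  "transversal M Top S \<longleftrightarrow> S \<in> sets M \<and>
     (\<forall>x\<in>topspace Top. countable (S \<inter> connected_component_of_set Top x))"

definition measurable_holonomy_map ::
  "'a measure \<Rightarrow> 'a topology \<Rightarrow> 'a set \<Rightarrow> 'a set \<Rightarrow> ('a \<Rightarrow> 'a) \<Rightarrow> bool" where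
  "measurable_holonomy_map M Top S S' h \<longleftrightarrow>
     transversal M Top S \<and> transversal M Top S' \<and> bij_betw h S S' \<and>
     h \<in> measurable (restrict_space M S) (restrict_space M S') \<and>
     the_inv_into S h \<in> measurable (restrict_space M S') (restrict_space M S) \<and>
     (\<forall>t\<in>S. h t \<in> connected_component_of_set Top t)"

definition measurable_homotopy ::
  "'a measure \<Rightarrow> 'a topology \<Rightarrow> 'a set \<Rightarrow> ('a \<times> real \<Rightarrow> 'a) \<Rightarrow> bool" where
  "measurable_homotopy M Top S H \<longleftrightarrow>
     H \<in> measurable (restrict_space M S \<Otimes>\<^sub>M borel) M \<and>
     continuous_map (prod_topology (discrete_topology S) euclideanreal) Top H"

end

theory Submission
  imports Defs
begin

text \<open>From a point t one moves inside plaques: a step follows a straight segment in ball coordinates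
  to a point whose ball coordinate lies in a fixed countable dense set D, and a chain of such steps
  ends with a segment inside one more plaque. The points reachable from t in this way form an open
  and closed set, hence contain the leaf of t and in particular h t. There are only countably many
  chains, so choosing for each t the first one, in a fixed enumeration, that ends at h t is
  measurable; running along the chosen chains gives the homotopy.\<close>

section \<open>Equality sets of maps into a standard Borel space\<close>

lemma standard_borel_countable_separating:
  assumes "standard_borel T"
  obtains F where "countable F" "F \<subseteq> sets T"
    "\<And>x y. x \<in> space T \<Longrightarrow> y \<in> space T \<Longrightarrow> x \<noteq> y \<Longrightarrow> \<exists>E\<in>F. x \<in> E \<and> y \<notin> E"
proof -
  obtain \<tau> where \<tau>: "topspace \<tau> = space T" "completely_metrizable_space \<tau>"
      "separable_space \<tau>" "sets T = sigma_sets (space T) {U. openin \<tau> U}"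
    using assms unfolding standard_borel_def by blast
  obtain X d where md: "Metric_space X d" "\<tau> = Metric_space.mtopology X d"
    using \<tau>(2) unfolding completely_metrizable_space_def by blast
  interpret Metric_space X d by (rule md(1))
  have top: "topspace \<tau> = X" using md(2) by simp
  obtain C where C: "countable C" "mtopology closure_of C = X"
    using \<tau>(3) top md(2) unfolding separable_space_def by metis
  define F where "F = (\<lambda>(c, r). mball c r) ` (C \<times> (\<rat> \<inter> {0<..}))"
  have "countable F"
    unfolding F_def using C(1) countable_rat
    by (intro countable_image countable_SIGMA) (auto intro: countable_subset[of _ \<rat>])
  moreover have "F \<subseteq> sets T"
  proof
    fix E assume "E \<in> F"
    then obtain c r where "E = mball c r" unfolding F_def by auto
    then show "E \<in> sets T" unfolding \<tau>(4) md(2) by (auto intro: sigma_sets.Basic)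
  qed
  moreover have "\<exists>E\<in>F. x \<in> E \<and> y \<notin> E" if x: "x \<in> X" and y: "y \<in> X" and "x \<noteq> y" for x y
  proof -
    define \<delta> where "\<delta> = d x y"
    have "\<delta> > 0" unfolding \<delta>_def using x y \<open>x \<noteq> y\<close> by simp
    have "x \<in> mtopology closure_of C" using C(2) x by simp
    then have "\<forall>r>0. \<exists>c\<in>C. c \<in> mball x r" unfolding metric_closure_of by blast
    moreover have "\<delta>/3 > 0" using \<open>\<delta> > 0\<close> by simp
    ultimately obtain c where c: "c \<in> C" "c \<in> mball x (\<delta>/3)" by blast
    obtain r where r: "r \<in> \<rat>" "\<delta>/3 < r" "r < 2*\<delta>/3"
      using Rats_dense_in_real[of "\<delta>/3" "2*\<delta>/3"] \<open>\<delta> > 0\<close> by auto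
    have cX: "c \<in> X" and dxc: "d x c < \<delta>/3" using c by auto
    have "x \<in> mball c r" using cX x dxc r commute[of x c] by simp
    moreover have "y \<notin> mball c r"
      using triangle[OF x cX y] dxc r unfolding \<delta>_def by auto
    moreover have "mball c r \<in> F"
      unfolding F_def using c(1) r \<open>\<delta> > 0\<close> by (intro image_eqI[where x="(c, r)"]) auto
    ultimately show ?thesis by blast
  qed
  ultimately show thesis using that \<tau>(1) top by simp
qed

lemma standard_borel_eq_set_measurable:
  assumes "standard_borel T" and u: "u \<in> measurable N T" and v: "v \<in> measurable N T"
  shows "{w \<in> space N. u w = v w} \<in> sets N"
proof -
  obtain F where F: "countable F" "F \<subseteq> sets T"
    "\<And>x y. x \<in> space T \<Longrightarrow> y \<in> space T \<Longrightarrow> x \<noteq> y \<Longrightarrow> \<exists>E\<in>F. x \<in> E \<and> y \<notin> E"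
    using standard_borel_countable_separating[OF assms(1)] by blast
  define sep where "sep E = (u -` E \<inter> space N - v -` E \<inter> space N) \<union> (v -` E \<inter> space N - u -` E \<inter> space N)" for E
  have "{w \<in> space N. u w = v w} = space N - (\<Union>E\<in>F. sep E)"
  proof (intro set_eqI iffI)
    fix w assume w: "w \<in> space N - (\<Union>E\<in>F. sep E)"
    have "u w = v w"
    proof (rule ccontr)
      assume "u w \<noteq> v w"
      moreover have "u w \<in> space T" "v w \<in> space T"
        using w measurable_space[OF u] measurable_space[OF v] by auto
      ultimately obtain E where "E \<in> F" "u w \<in> E" "v w \<notin> E" using F(3) by blast
      then show False using w unfolding sep_def by auto
    qed
    then show "w \<in> {w \<in> space N. u w = v w}" using w by simp
  qed (auto simp: sep_def)
  moreover have "sep E \<in> sets N" if "E \<in> F" for E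
    using measurable_sets[OF u] measurable_sets[OF v] that F(2) unfolding sep_def by blast
  ultimately show ?thesis using F(1) by (simp add: sets.countable_UN'' sets.Diff)
qed

definition chart_dom :: "('a, 'e::euclidean_space, 'b) chart \<Rightarrow> 'a set" where
  "chart_dom c = fst c"

definition chart_map :: "('a, 'e::euclidean_space, 'b) chart \<Rightarrow> 'a \<Rightarrow> 'e \<times> 'b" where
  "chart_map c = fst (snd c)"

definition chart_ball :: "('a, 'e::euclidean_space, 'b) chart \<Rightarrow> 'e set" where
  "chart_ball c = fst (snd (snd c))"

definition chart_transversal :: "('a, 'e::euclidean_space, 'b) chart \<Rightarrow> 'b measure" where
  "chart_transversal c = snd (snd (snd c))"

definition chart_inv :: "('a, 'e::euclidean_space, 'b) chart \<Rightarrow> 'e \<times> 'b \<Rightarrow> 'a" where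
  "chart_inv c = the_inv_into (chart_dom c) (chart_map c)"

definition nonempty_chart :: "'a measure \<Rightarrow> 'a topology \<Rightarrow> ('a, 'e::euclidean_space, 'b) chart \<Rightarrow> bool" where
  "nonempty_chart M Top c \<longleftrightarrow> is_chart M Top c \<and> chart_dom c \<noteq> {}"

text \<open>Extended by a constant off the chart domain, so that it is measurable on all of M.\<close>
definition chart_coord :: "('a, 'e::euclidean_space, 'b) chart \<Rightarrow> 'a \<Rightarrow> 'e \<times> 'b" where
  "chart_coord c x = chart_map c (if x \<in> chart_dom c then x else SOME u. u \<in> chart_dom c)"

lemma nonempty_chart_fol_chart:
  "nonempty_chart M Top c \<Longrightarrow>
    fol_chart M Top (chart_dom c) (chart_map c) (chart_ball c) (chart_transversal c)"
  unfolding nonempty_chart_def is_chart_def chart_dom_def chart_map_def chart_ball_def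
    chart_transversal_def
  by (auto split: prod.splits)

lemma space_model_measure: "space (model_measure B T) = B \<times> space T"
  by (simp add: model_measure_def space_pair_measure space_restrict_space)

context
  fixes M :: "'a measure" and Top :: "'a topology" and c :: "('a, 'e::euclidean_space, 'b) chart"
  assumes c: "nonempty_chart M Top c"
begin

lemma chart_dom_sets: "chart_dom c \<in> sets M"
  and openin_chart_dom: "openin Top (chart_dom c)"
  and open_chart_ball: "open (chart_ball c)"
  and convex_chart_ball: "convex (chart_ball c)"
  and standard_borel_chart_transversal: "standard_borel (chart_transversal c)"
  and bij_betw_chart_map: "bij_betw (chart_map c) (chart_dom c) (chart_ball c \<times> space (chart_transversal c))"
  and measurable_chart_map:
    "chart_map c \<in> measurable (restrict_space M (chart_dom c)) (model_measure (chart_ball c) (chart_transversal c))"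
  and measurable_chart_inv:
    "chart_inv c \<in> measurable (model_measure (chart_ball c) (chart_transversal c)) M"
  and homeomorphic_map_chart_map:
    "homeomorphic_map (subtopology Top (chart_dom c)) (model_topology (chart_ball c) (chart_transversal c)) (chart_map c)"
  using nonempty_chart_fol_chart[OF c]
  by (auto simp: fol_chart_def chart_inv_def measurable_restrict_space2_iff)

lemma chart_dom_subset_topspace: "chart_dom c \<subseteq> topspace Top"
  using openin_chart_dom openin_subset by blast

lemma inj_on_chart_map: "inj_on (chart_map c) (chart_dom c)"
  and image_chart_map: "chart_map c ` chart_dom c = chart_ball c \<times> space (chart_transversal c)"
  using bij_betw_chart_map by (simp_all add: bij_betw_def)

lemma chart_map_in: "x \<in> chart_dom c \<Longrightarrow> chart_map c x \<in> chart_ball c \<times> space (chart_transversal c)"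
  using image_chart_map by blast

lemma chart_inv_in:
  assumes "p \<in> chart_ball c \<times> space (chart_transversal c)"
  shows "chart_inv c p \<in> chart_dom c" and "chart_map c (chart_inv c p) = p"
  using assms inj_on_chart_map image_chart_map
  by (simp_all add: chart_inv_def the_inv_into_into f_the_inv_into_f)

lemma chart_inv_map: "x \<in> chart_dom c \<Longrightarrow> chart_inv c (chart_map c x) = x"
  by (simp add: chart_inv_def the_inv_into_f_f[OF inj_on_chart_map])

lemma chart_coord_eq: "x \<in> chart_dom c \<Longrightarrow> chart_coord c x = chart_map c x"
  by (simp add: chart_coord_def)

lemma some_in_chart_dom: "(SOME u. u \<in> chart_dom c) \<in> chart_dom c"
  using c unfolding nonempty_chart_def by (simp add: some_in_eq)

lemma chart_coord_in: "chart_coord c x \<in> chart_ball c \<times> space (chart_transversal c)"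
  unfolding chart_coord_def using some_in_chart_dom by (auto intro: chart_map_in)

lemma measurable_chart_coord:
  "chart_coord c \<in> measurable M (model_measure (chart_ball c) (chart_transversal c))"
proof -
  have dom: "{x \<in> space M. x \<in> chart_dom c} \<in> sets M"
    using chart_dom_sets sets.sets_into_space[OF chart_dom_sets] by (simp add: Int_absorb1 Collect_conj_eq)
  have "chart_coord c = (\<lambda>x. if x \<in> chart_dom c then chart_map c x
      else chart_map c (SOME u. u \<in> chart_dom c))"
    by (auto simp: chart_coord_def)
  also have "\<dots> \<in> measurable M (model_measure (chart_ball c) (chart_transversal c))"
    using measurable_chart_map chart_map_in[OF some_in_chart_dom]
    by (subst measurable_If_restrict_space_iff[OF dom]) (simp add: space_model_measure)
  finally show ?thesis .
qed

lemma measurable_chart_coord_comp: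
  assumes "f \<in> measurable N M"
  shows "(\<lambda>w. fst (chart_coord c (f w))) \<in> borel_measurable N"
    and "(\<lambda>w. snd (chart_coord c (f w))) \<in> measurable N (chart_transversal c)"
proof -
  have "(\<lambda>w. chart_coord c (f w)) \<in> measurable N (restrict_space borel (chart_ball c) \<Otimes>\<^sub>M chart_transversal c)"
    using measurable_comp[OF assms measurable_chart_coord] by (simp add: model_measure_def comp_def)
  from measurable_comp[OF this measurable_fst] measurable_comp[OF this measurable_snd]
  show "(\<lambda>w. fst (chart_coord c (f w))) \<in> borel_measurable N"
    and "(\<lambda>w. snd (chart_coord c (f w))) \<in> measurable N (chart_transversal c)"
    by (simp_all add: comp_def measurable_restrict_space2_iff)
qed

lemma continuous_map_chart_inv:
  "continuous_map (model_topology (chart_ball c) (chart_transversal c)) Top (chart_inv c)"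
proof -
  obtain g where g: "homeomorphic_maps (subtopology Top (chart_dom c))
      (model_topology (chart_ball c) (chart_transversal c)) (chart_map c) g"
    using homeomorphic_map_chart_map homeomorphic_map_maps by blast
  then have gc: "continuous_map (model_topology (chart_ball c) (chart_transversal c))
      (subtopology Top (chart_dom c)) g"
    unfolding homeomorphic_maps_def by blast
  have "g p = chart_inv c p" if "p \<in> topspace (model_topology (chart_ball c) (chart_transversal c))" for p
  proof -
    have "g p \<in> chart_dom c"
      using continuous_map_image_subset_topspace[OF gc] that chart_dom_subset_topspace by auto
    moreover have "chart_map c (g p) = p" using g that unfolding homeomorphic_maps_def by blast
    ultimately show ?thesis using chart_inv_map by metis
  qed
  then show ?thesis using continuous_map_eq[OF continuous_map_into_fulltopology[OF gc]] by blast
qed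

end

definition plaque_of :: "('a, 'e::euclidean_space, 'b) chart \<Rightarrow> 'a \<Rightarrow> 'a set" where
  "plaque_of c x = {y \<in> chart_dom c. snd (chart_map c y) = snd (chart_map c x)}"

lemma plaque_of_eq: "y \<in> plaque_of c x \<Longrightarrow> plaque_of c y = plaque_of c x"
  by (auto simp: plaque_of_def)

lemma chart_map_in_plaque_of:
  "y \<in> plaque_of c x \<Longrightarrow> (fst (chart_map c y), snd (chart_map c x)) = chart_map c y"
  by (simp add: plaque_of_def prod_eq_iff)

lemma openin_plaque_of:
  assumes c: "nonempty_chart M Top c"
  shows "openin Top (plaque_of c x)"
proof -
  have "openin (model_topology (chart_ball c) (chart_transversal c))
      (chart_ball c \<times> ({snd (chart_map c x)} \<inter> space (chart_transversal c)))"
    unfolding model_topology_def by (auto simp: openin_prod_Times_iff)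
  from openin_continuous_map_preimage[OF
      homeomorphic_imp_continuous_map[OF homeomorphic_map_chart_map[OF c]] this]
  moreover have "{y \<in> topspace (subtopology Top (chart_dom c)).
      chart_map c y \<in> chart_ball c \<times> ({snd (chart_map c x)} \<inter> space (chart_transversal c))}
      = plaque_of c x"
    using chart_dom_subset_topspace[OF c] chart_map_in[OF c]
    unfolding plaque_of_def by (auto simp: mem_Times_iff)
  ultimately have "openin (subtopology Top (chart_dom c)) (plaque_of c x)" by simp
  then show ?thesis using openin_trans_full openin_chart_dom[OF c] by blast
qed

section \<open>Leafwise moves inside a plaque\<close>

definition clamp01 :: "real \<Rightarrow> real" where
  "clamp01 r = max 0 (min 1 r)"

lemma clamp01_bounds: "0 \<le> clamp01 r" "clamp01 r \<le> 1"
  and clamp01_0 [simp]: "clamp01 0 = 0"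
  and clamp01_1 [simp]: "clamp01 1 = 1"
  by (auto simp: clamp01_def)

lemma continuous_on_clamp01: "continuous_on UNIV clamp01"
  unfolding clamp01_def by (intro continuous_intros)

lemma borel_measurable_clamp01: "clamp01 \<in> borel_measurable borel"
  using continuous_on_clamp01 by (rule borel_measurable_continuous_onI)

definition plaque_segment ::
  "('a, 'e::euclidean_space, 'b) chart \<Rightarrow> 'a \<Rightarrow> 'a \<Rightarrow> real \<Rightarrow> 'a" where
  "plaque_segment c a b r = chart_inv c
     ((1 - clamp01 r) *\<^sub>R fst (chart_coord c a) + clamp01 r *\<^sub>R fst (chart_coord c b), snd (chart_coord c a))"

definition plaque_shift :: "('a, 'e::euclidean_space, 'b) chart \<Rightarrow> 'e \<Rightarrow> 'a \<Rightarrow> 'a" where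
  "plaque_shift c q x = chart_inv c (q, snd (chart_coord c x))"

context
  fixes M :: "'a measure" and Top :: "'a topology" and c :: "('a, 'e::euclidean_space, 'b) chart"
  assumes c: "nonempty_chart M Top c"
begin

lemma segment_point_in_chart_ball:
  "(1 - clamp01 r) *\<^sub>R p + clamp01 r *\<^sub>R q \<in> chart_ball c"
  if "p \<in> chart_ball c" "q \<in> chart_ball c"
  using convex_chart_ball[OF c] that clamp01_bounds[of r] by (intro convexD) auto

lemma measurable_plaque_segment:
  assumes f: "f \<in> measurable N M" and g: "g \<in> measurable N M" and \<rho>: "\<rho> \<in> borel_measurable N"
  shows "(\<lambda>w. plaque_segment c (f w) (g w) (\<rho> w)) \<in> measurable N M"
proof -
  define p where "p w = (1 - clamp01 (\<rho> w)) *\<^sub>R fst (chart_coord c (f w))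
      + clamp01 (\<rho> w) *\<^sub>R fst (chart_coord c (g w))" for w
  have "(\<lambda>w. clamp01 (\<rho> w)) \<in> borel_measurable N"
    using measurable_comp[OF \<rho> borel_measurable_clamp01] by (simp add: comp_def)
  then have "p \<in> borel_measurable N"
    unfolding p_def using measurable_chart_coord_comp(1)[OF c f] measurable_chart_coord_comp(1)[OF c g]
    by (intro borel_measurable_add borel_measurable_scaleR borel_measurable_diff borel_measurable_const)
  moreover have "p w \<in> chart_ball c" for w
    unfolding p_def using chart_coord_in[OF c] by (intro segment_point_in_chart_ball) (auto simp: mem_Times_iff)
  ultimately have "(\<lambda>w. (p w, snd (chart_coord c (f w))))
      \<in> measurable N (model_measure (chart_ball c) (chart_transversal c))"
    unfolding model_measure_def using measurable_chart_coord_comp(2)[OF c f]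
    by (intro measurable_Pair measurable_restrict_space2) auto
  from measurable_comp[OF this measurable_chart_inv[OF c]] show ?thesis
    by (simp add: comp_def plaque_segment_def p_def)
qed

lemma measurable_plaque_shift:
  assumes f: "f \<in> measurable N M" and q: "q \<in> chart_ball c"
  shows "(\<lambda>w. plaque_shift c q (f w)) \<in> measurable N M"
proof -
  have "(\<lambda>w. (q, snd (chart_coord c (f w)))) \<in> measurable N (model_measure (chart_ball c) (chart_transversal c))"
    unfolding model_measure_def using q measurable_chart_coord_comp(2)[OF c f]
    by (intro measurable_Pair measurable_const) (auto simp: space_restrict_space)
  from measurable_comp[OF this measurable_chart_inv[OF c]] show ?thesis
    by (simp add: comp_def plaque_shift_def)
qed

lemma continuous_map_plaque_segment:
  assumes a: "a \<in> chart_dom c" and "b \<in> plaque_of c a"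
  shows "continuous_map euclideanreal Top (plaque_segment c a b)"
proof -
  have b: "b \<in> chart_dom c" "snd (chart_map c b) = snd (chart_map c a)"
    using assms by (auto simp: plaque_of_def)
  define p where "p r = (1 - clamp01 r) *\<^sub>R fst (chart_map c a) + clamp01 r *\<^sub>R fst (chart_map c b)" for r
  have "continuous_on UNIV p"
    unfolding p_def using continuous_on_clamp01 by (intro continuous_intros) (auto intro: continuous_on_subset)
  moreover have "p r \<in> chart_ball c" for r
    unfolding p_def using chart_map_in[OF c a] chart_map_in[OF c b(1)]
    by (intro segment_point_in_chart_ball) (auto simp: mem_Times_iff)
  ultimately have "continuous_map euclideanreal (model_topology (chart_ball c) (chart_transversal c))
      (\<lambda>r. (p r, snd (chart_map c a)))"
    unfolding model_topology_def continuous_map_pairwise using chart_map_in[OF c a]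
    by (auto simp: comp_def continuous_map_in_subtopology mem_Times_iff)
  moreover have "plaque_segment c a b = chart_inv c \<circ> (\<lambda>r. (p r, snd (chart_map c a)))"
    using a b by (simp add: fun_eq_iff plaque_segment_def p_def chart_coord_eq[OF c])
  ultimately show ?thesis using continuous_map_compose continuous_map_chart_inv[OF c] by metis
qed

lemma plaque_segment_0: "a \<in> chart_dom c \<Longrightarrow> plaque_segment c a b 0 = a"
  by (simp add: plaque_segment_def chart_coord_eq[OF c] chart_inv_map[OF c])

lemma plaque_segment_1:
  assumes "a \<in> chart_dom c" "b \<in> plaque_of c a"
  shows "plaque_segment c a b 1 = b"
  using chart_map_in_plaque_of[OF assms(2)] assms
  by (simp add: plaque_segment_def plaque_of_def chart_coord_eq[OF c] chart_inv_map[OF c])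

lemma plaque_shift_in_plaque_of:
  assumes "q \<in> chart_ball c" "x \<in> chart_dom c"
  shows "plaque_shift c q x \<in> plaque_of c x"
proof -
  have "(q, snd (chart_map c x)) \<in> chart_ball c \<times> space (chart_transversal c)"
    using assms chart_map_in[OF c] by (auto simp: mem_Times_iff)
  from chart_inv_in[OF c this] show ?thesis
    using assms by (simp add: plaque_shift_def plaque_of_def chart_coord_eq[OF c])
qed

lemma plaque_shift_dense:
  assumes x: "x \<in> chart_dom c" and U: "openin Top U" "U \<inter> plaque_of c x \<noteq> {}"
    and D: "\<And>X. open X \<Longrightarrow> X \<noteq> {} \<Longrightarrow> X \<inter> D \<noteq> {}"
  obtains q where "q \<in> D" "q \<in> chart_ball c" "plaque_shift c q x \<in> U"
proof -
  define \<tau> where "\<tau> = snd (chart_map c x)"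
  have \<tau>: "\<tau> \<in> space (chart_transversal c)" using chart_map_in[OF c x] by (simp add: \<tau>_def mem_Times_iff)
  have "continuous_map (top_of_set (chart_ball c)) (model_topology (chart_ball c) (chart_transversal c))
      (\<lambda>e. (e, \<tau>))"
    unfolding model_topology_def continuous_map_pairwise using \<tau>
    by (auto simp: comp_def continuous_map_in_subtopology)
  from continuous_map_compose[OF this continuous_map_chart_inv[OF c]]
  have "continuous_map (top_of_set (chart_ball c)) Top (\<lambda>e. chart_inv c (e, \<tau>))"
    by (simp add: comp_def)
  from openin_continuous_map_preimage[OF this U(1)]
  have "openin (top_of_set (chart_ball c)) {e \<in> chart_ball c. chart_inv c (e, \<tau>) \<in> U}"
    by simp
  then have "open {e \<in> chart_ball c. chart_inv c (e, \<tau>) \<in> U}"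
    using open_chart_ball[OF c] openin_open_trans by blast
  moreover obtain z where z: "z \<in> U" "z \<in> plaque_of c x" using U(2) by blast
  have "fst (chart_map c z) \<in> {e \<in> chart_ball c. chart_inv c (e, \<tau>) \<in> U}"
    using z chart_map_in[OF c] chart_inv_map[OF c] chart_map_in_plaque_of[OF z(2)]
    by (auto simp: plaque_of_def mem_Times_iff \<tau>_def)
  ultimately obtain q where "q \<in> D" "q \<in> chart_ball c" "chart_inv c (q, \<tau>) \<in> U"
    using D by blast
  then show thesis using that x by (simp add: plaque_shift_def chart_coord_eq[OF c] \<tau>_def)
qed

end

section \<open>Chains of plaques\<close>

text \<open>A chain from x is a list of steps (c, q): move within the plaque of c to the point with ball
  coordinate q. A valid chain from x to y ends in a final chart cf in whose plaque y lies.\<close>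
type_synonym ('a, 'e, 'b) chain_steps = "(('a, 'e, 'b) chart \<times> 'e) list"

definition admissible_steps :: "'a measure \<Rightarrow> 'a topology \<Rightarrow> (('a, 'e::euclidean_space, 'b) chart \<times> 'e) set" where
  "admissible_steps M Top = {(c, q). nonempty_chart M Top c \<and> q \<in> chart_ball c}"

fun chain_end :: "'a \<Rightarrow> ('a, 'e::euclidean_space, 'b) chain_steps \<Rightarrow> 'a" where
  "chain_end x [] = x"
| "chain_end x ((c, q) # st) = chain_end (plaque_shift c q x) st"

fun valid_steps :: "'a \<Rightarrow> ('a, 'e::euclidean_space, 'b) chain_steps \<Rightarrow> bool" where
  "valid_steps x [] = True"
| "valid_steps x ((c, q) # st) \<longleftrightarrow>
     x \<in> chart_dom c \<and> q \<in> chart_ball c \<and> valid_steps (plaque_shift c q x) st"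

definition valid_chain ::
  "'a \<Rightarrow> ('a, 'e::euclidean_space, 'b) chain_steps \<Rightarrow> ('a, 'e, 'b) chart \<Rightarrow> 'a \<Rightarrow> bool" where
  "valid_chain x st cf y \<longleftrightarrow>
     valid_steps x st \<and> chain_end x st \<in> chart_dom cf \<and> y \<in> plaque_of cf (chain_end x st)"

text \<open>The path of a chain spends the time interval [i, i + 1] on its i-th step.\<close>
fun chain_path ::
  "'a \<Rightarrow> ('a, 'e::euclidean_space, 'b) chain_steps \<Rightarrow> ('a, 'e, 'b) chart \<Rightarrow> 'a \<Rightarrow> real \<Rightarrow> 'a" where
  "chain_path x [] cf y r = plaque_segment cf x y r"
| "chain_path x ((c, q) # st) cf y r =
     (if r \<le> 1 then plaque_segment c x (plaque_shift c q x) r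
      else chain_path (plaque_shift c q x) st cf y (r - 1))"

lemma valid_chain_Nil: "valid_chain x [] cf y \<longleftrightarrow> x \<in> chart_dom cf \<and> y \<in> plaque_of cf x"
  by (simp add: valid_chain_def)

lemma valid_chain_Cons:
  "valid_chain x ((c, q) # st) cf y \<longleftrightarrow>
     x \<in> chart_dom c \<and> q \<in> chart_ball c \<and> valid_chain (plaque_shift c q x) st cf y"
  by (auto simp: valid_chain_def)

lemma valid_steps_append:
  "valid_steps x (st @ st') \<longleftrightarrow> valid_steps x st \<and> valid_steps (chain_end x st) st'"
  by (induction x st rule: valid_steps.induct) auto

lemma chain_end_append: "chain_end x (st @ st') = chain_end (chain_end x st) st'"
  by (induction x st rule: chain_end.induct) auto

lemma measurable_chain_end:
  assumes "set st \<subseteq> admissible_steps M Top" and "f \<in> measurable N M"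
  shows "(\<lambda>w. chain_end (f w) st) \<in> measurable N M"
  using assms
proof (induction st arbitrary: f)
  case (Cons s st)
  obtain c q where s: "s = (c, q)" by fastforce
  then have c: "nonempty_chart M Top c" and q: "q \<in> chart_ball c" and st: "set st \<subseteq> admissible_steps M Top"
    using Cons.prems(1) by (auto simp: admissible_steps_def)
  show ?case
    using Cons.IH[OF st measurable_plaque_shift[OF c Cons.prems(2) q]] by (simp add: s)
qed simp

lemma sets_valid_steps:
  assumes "set st \<subseteq> admissible_steps M Top" and "f \<in> measurable N M"
  shows "{w \<in> space N. valid_steps (f w) st} \<in> sets N"
  using assms
proof (induction st arbitrary: f)
  case (Cons s st)
  obtain c q where s: "s = (c, q)" by fastforce
  then have c: "nonempty_chart M Top c" and "q \<in> chart_ball c"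
    using Cons.prems(1) by (auto simp: admissible_steps_def)
  then have "{w \<in> space N. valid_steps (f w) (s # st)} =
      (f -` chart_dom c \<inter> space N) \<inter> {w \<in> space N. valid_steps (plaque_shift c q (f w)) st}"
    by (auto simp: s)
  then show ?case
    using Cons measurable_plaque_shift[OF c Cons.prems(2) \<open>q \<in> chart_ball c\<close>]
      measurable_sets[OF Cons.prems(2) chart_dom_sets[OF c]]
    by (simp add: sets.Int)
qed simp

context
  fixes M :: "'a measure" and Top :: "'a topology" and cf :: "('a, 'e::euclidean_space, 'b) chart"
  assumes cf: "nonempty_chart M Top cf"
begin

lemma sets_valid_chain:
  assumes "set st \<subseteq> admissible_steps M Top" and f: "f \<in> measurable N M" and g: "g \<in> measurable N M"
  shows "{w \<in> space N. valid_chain (f w) st cf (g w)} \<in> sets N"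
proof -
  define e where "e w = chain_end (f w) st" for w
  have e: "e \<in> measurable N M"
    unfolding e_def using measurable_chain_end[OF assms(1) f] .
  have "{w \<in> space N. valid_chain (f w) st cf (g w)} =
      {w \<in> space N. valid_steps (f w) st} \<inter> (e -` chart_dom cf \<inter> space N) \<inter> (g -` chart_dom cf \<inter> space N)
      \<inter> {w \<in> space N. snd (chart_coord cf (e w)) = snd (chart_coord cf (g w))}"
    by (auto simp: valid_chain_def plaque_of_def e_def chart_coord_eq[OF cf])
  moreover have "{w \<in> space N. snd (chart_coord cf (e w)) = snd (chart_coord cf (g w))} \<in> sets N"
    using standard_borel_eq_set_measurable[OF standard_borel_chart_transversal[OF cf]
        measurable_chart_coord_comp(2)[OF cf e] measurable_chart_coord_comp(2)[OF cf g]] .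
  ultimately show ?thesis
    using sets_valid_steps[OF assms(1) f] measurable_sets[OF e chart_dom_sets[OF cf]]
      measurable_sets[OF g chart_dom_sets[OF cf]]
    by (simp add: sets.Int)
qed

lemma chain_path_0:
  assumes "valid_chain x st cf y" "set st \<subseteq> admissible_steps M Top"
  shows "chain_path x st cf y 0 = x"
proof (cases st)
  case Nil
  then show ?thesis using assms cf by (simp add: valid_chain_Nil plaque_segment_0)
next
  case (Cons s st')
  obtain c q where s: "s = (c, q)" by fastforce
  then have "nonempty_chart M Top c" using assms(2) Cons by (simp add: admissible_steps_def)
  then show ?thesis using assms(1) Cons s by (simp add: valid_chain_Cons plaque_segment_0)
qed

lemma chain_path_length:
  assumes "valid_chain x st cf y" "set st \<subseteq> admissible_steps M Top"
  shows "chain_path x st cf y (real (length st) + 1) = y"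
  using assms
proof (induction st arbitrary: x)
  case Nil
  then show ?case using plaque_segment_1[OF cf, of x y] by (simp add: valid_chain_Nil)
next
  case (Cons s st)
  obtain c q where "s = (c, q)" by fastforce
  with Cons show ?case by (simp add: valid_chain_Cons add.commute)
qed

lemma continuous_map_chain_path:
  assumes "valid_chain x st cf y" "set st \<subseteq> admissible_steps M Top"
  shows "continuous_map euclideanreal Top (chain_path x st cf y)"
  using assms
proof (induction st arbitrary: x)
  case Nil
  have "chain_path x [] cf y = plaque_segment cf x y" by (simp add: fun_eq_iff)
  then show ?case using Nil continuous_map_plaque_segment[OF cf] by (simp add: valid_chain_Nil)
next
  case (Cons s st)
  obtain c q where s: "s = (c, q)" by fastforce
  define x' where "x' = plaque_shift c q x"
  have c: "nonempty_chart M Top c" and q: "q \<in> chart_ball c" and st: "set st \<subseteq> admissible_steps M Top"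
    using Cons.prems s by (auto simp: admissible_steps_def)
  have x: "x \<in> chart_dom c" and valid: "valid_chain x' st cf y"
    using Cons.prems(1) s by (simp_all add: valid_chain_Cons x'_def)
  have x': "x' \<in> plaque_of c x" unfolding x'_def using plaque_shift_in_plaque_of[OF c q x] .
  have "continuous_map euclideanreal Top (\<lambda>r. chain_path x' st cf y (r - 1))"
    using continuous_map_compose[OF _ Cons.IH[OF valid st], of euclideanreal "\<lambda>r. r - 1"]
    by (simp add: comp_def continuous_intros)
  then have "continuous_map euclideanreal Top
      (\<lambda>r. if r \<le> 1 then plaque_segment c x x' r else chain_path x' st cf y (r - 1))"
    using continuous_map_plaque_segment[OF c x x'] plaque_segment_1[OF c x x'] chain_path_0[OF valid st]
    by (intro continuous_map_cases_le[where p="\<lambda>r. r" and q="\<lambda>r. 1", simplified])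
      (auto intro: continuous_map_from_subtopology)
  then show ?case unfolding s x'_def by simp
qed

lemma measurable_chain_path:
  assumes "set st \<subseteq> admissible_steps M Top"
    and "f \<in> measurable N M" "g \<in> measurable N M" "\<rho> \<in> borel_measurable N"
  shows "(\<lambda>w. chain_path (f w) st cf (g w) (\<rho> w)) \<in> measurable N M"
  using assms
proof (induction st arbitrary: f \<rho>)
  case Nil
  then show ?case using measurable_plaque_segment[OF cf] by simp
next
  case (Cons s st)
  obtain c q where s: "s = (c, q)" by fastforce
  have c: "nonempty_chart M Top c" and q: "q \<in> chart_ball c" and st: "set st \<subseteq> admissible_steps M Top"
    using Cons.prems s by (auto simp: admissible_steps_def)
  have shift: "(\<lambda>w. plaque_shift c q (f w)) \<in> measurable N M"
    using measurable_plaque_shift[OF c Cons.prems(2) q] .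
  have "{w \<in> space N. \<rho> w \<le> 1} \<in> sets N" using Cons.prems(4) by measurable
  moreover have "(\<lambda>w. \<rho> w - 1) \<in> borel_measurable N" using Cons.prems(4) by measurable
  ultimately show ?case
    using measurable_plaque_segment[OF c Cons.prems(2) shift Cons.prems(4)]
      Cons.IH[OF st shift Cons.prems(3)]
    by (simp add: s measurable_If)
qed

end

section \<open>Leaves are swept out by chains\<close>

definition dense_steps ::
  "('a, 'e::euclidean_space, 'b) chart set \<Rightarrow> 'e set \<Rightarrow> (('a, 'e, 'b) chart \<times> 'e) set" where
  "dense_steps A D = {(c, q). c \<in> A \<and> q \<in> D \<inter> chart_ball c}"

definition chain_reachable ::
  "(('a, 'e::euclidean_space, 'b) chart \<times> 'e) set \<Rightarrow> ('a, 'e, 'b) chart set \<Rightarrow> 'a \<Rightarrow> 'a set" where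
  "chain_reachable St A t = {y. \<exists>st\<in>lists St. \<exists>cf\<in>A. valid_chain t st cf y}"

lemma openin_chain_reachable:
  assumes "\<And>c. c \<in> A \<Longrightarrow> nonempty_chart M Top c"
  shows "openin Top (chain_reachable St A t)"
proof (subst openin_subopen, intro ballI)
  fix y assume "y \<in> chain_reachable St A t"
  then obtain st cf where st: "st \<in> lists St" "cf \<in> A" and valid: "valid_chain t st cf y"
    unfolding chain_reachable_def by blast
  let ?V = "plaque_of cf (chain_end t st)"
  have "?V \<subseteq> chain_reachable St A t"
  proof
    fix z assume "z \<in> ?V"
    then have "valid_chain t st cf z" using valid by (simp add: valid_chain_def)
    then show "z \<in> chain_reachable St A t" using st unfolding chain_reachable_def by blast
  qed
  moreover have "openin Top ?V" using openin_plaque_of[OF assms[OF st(2)]] .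
  ultimately show "\<exists>V. openin Top V \<and> y \<in> V \<and> V \<subseteq> chain_reachable St A t"
    using valid unfolding valid_chain_def by auto
qed

lemma closedin_chain_reachable:
  assumes A: "\<And>c. c \<in> A \<Longrightarrow> nonempty_chart M Top c"
    and cover: "topspace Top \<subseteq> (\<Union>c\<in>A. chart_dom c)"
    and D: "\<And>X. open X \<Longrightarrow> X \<noteq> {} \<Longrightarrow> X \<inter> D \<noteq> {}"
  shows "closedin Top (chain_reachable (dense_steps A D) A t)"
    (is "closedin Top ?R")
proof -
  have "\<exists>V. openin Top V \<and> y \<in> V \<and> V \<subseteq> topspace Top - ?R" if y: "y \<in> topspace Top - ?R" for y
  proof -
    obtain c' where c': "c' \<in> A" "y \<in> chart_dom c'" using cover y by blast
    have V: "openin Top (plaque_of c' y)" using openin_plaque_of[OF A[OF c'(1)]] .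
    have "plaque_of c' y \<inter> ?R = {}"
    proof (rule ccontr)
      assume "plaque_of c' y \<inter> ?R \<noteq> {}"
      then obtain z st cf where z: "z \<in> plaque_of c' y" and st: "st \<in> lists (dense_steps A D)"
        and cf: "cf \<in> A" and valid: "valid_chain t st cf z"
        unfolding chain_reachable_def by blast
      define x where "x = chain_end t st"
      have x: "x \<in> chart_dom cf" and zx: "z \<in> plaque_of cf x" and steps: "valid_steps t st"
        using valid by (simp_all add: valid_chain_def x_def)
      have "plaque_of c' y \<inter> plaque_of cf x \<noteq> {}" using z zx by blast
      then obtain q where q: "q \<in> D" "q \<in> chart_ball cf" and
        shift: "plaque_shift cf q x \<in> plaque_of c' y"
        using plaque_shift_dense[OF A[OF cf] x V _ D] by metis
      \<comment> \<open>one more step, to a point of D, takes the chain from the plaque of z into that of y\<close>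
      have "y \<in> plaque_of c' (plaque_shift cf q x)"
        using plaque_of_eq[OF shift] c'(2) by (simp add: plaque_of_def)
      then have "valid_chain t (st @ [(cf, q)]) c' y"
        using steps x q(2) shift
        by (simp add: valid_chain_def valid_steps_append chain_end_append x_def plaque_of_def)
      moreover have "st @ [(cf, q)] \<in> lists (dense_steps A D)"
        using st cf q by (simp add: dense_steps_def)
      ultimately have "y \<in> ?R" using c'(1) unfolding chain_reachable_def by blast
      then show False using y by blast
    qed
    then show ?thesis using V c'(2) openin_subset[OF V] by (auto simp: plaque_of_def)
  qed
  then have "openin Top (topspace Top - ?R)" by (subst openin_subopen) blast
  moreover have "?R \<subseteq> topspace Top"
    using A chart_dom_subset_topspace by (fastforce simp: chain_reachable_def valid_chain_def plaque_of_def)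
  ultimately show ?thesis by (simp add: closedin_def)
qed

lemma connected_component_subset_chain_reachable:
  assumes A: "\<And>c. c \<in> A \<Longrightarrow> nonempty_chart M Top c"
    and cover: "topspace Top \<subseteq> (\<Union>c\<in>A. chart_dom c)"
    and D: "\<And>X. open X \<Longrightarrow> X \<noteq> {} \<Longrightarrow> X \<inter> D \<noteq> {}"
    and t: "t \<in> topspace Top"
  shows "connected_component_of_set Top t \<subseteq> chain_reachable (dense_steps A D) A t"
proof -
  obtain cf where "cf \<in> A" "t \<in> chart_dom cf" using cover t by blast
  then have "t \<in> chain_reachable (dense_steps A D) A t"
    unfolding chain_reachable_def by (intro CollectI bexI[of _ "[]"]) (auto simp: valid_chain_Nil plaque_of_def)
  moreover have "t \<in> connected_component_of_set Top t"
    using t by (simp add: connected_component_of_refl)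
  ultimately show ?thesis
    using connectedin_clopen_cases[OF connectedin_connected_component_of
        closedin_chain_reachable[OF A cover D] openin_chain_reachable[OF A]]
    by (auto simp: disjnt_iff)
qed

lemma countable_chains_sweep_leaves:
  fixes A :: "('a, 'e::euclidean_space, 'b) chart set"
  assumes "countable A" and A: "\<And>c. c \<in> A \<Longrightarrow> nonempty_chart M Top c"
    and cover: "topspace Top \<subseteq> (\<Union>c\<in>A. chart_dom c)"
  obtains I :: "(('a, 'e, 'b) chain_steps \<times> ('a, 'e, 'b) chart) set"
  where "countable I"
    and "\<And>st cf. (st, cf) \<in> I \<Longrightarrow> nonempty_chart M Top cf \<and> set st \<subseteq> admissible_steps M Top"
    and "\<And>t y. t \<in> topspace Top \<Longrightarrow> y \<in> connected_component_of_set Top t \<Longrightarrow>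
           \<exists>(st, cf)\<in>I. valid_chain t st cf y"
proof -
  obtain D :: "'e set" where "countable D" and D: "\<And>X. open X \<Longrightarrow> X \<noteq> {} \<Longrightarrow> X \<inter> D \<noteq> {}"
    using countable_dense_setE by (metis disjoint_iff)
  define I where "I = lists (dense_steps A D) \<times> A"
  have "countable I"
    unfolding I_def dense_steps_def using \<open>countable A\<close> \<open>countable D\<close>
    by (intro countable_SIGMA countable_lists countable_subset[of _ "A \<times> D"]) auto
  moreover have "nonempty_chart M Top cf \<and> set st \<subseteq> admissible_steps M Top" if "(st, cf) \<in> I" for st cf
    using that A by (auto simp: I_def dense_steps_def admissible_steps_def)
  moreover have "\<exists>(st, cf)\<in>I. valid_chain t st cf y"
    if "t \<in> topspace Top" "y \<in> connected_component_of_set Top t" for t y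
  proof -
    have "y \<in> chain_reachable (dense_steps A D) A t"
      using connected_component_subset_chain_reachable[OF A cover D] that by blast
    then obtain st cf where "st \<in> lists (dense_steps A D)" "cf \<in> A" "valid_chain t st cf y"
      unfolding chain_reachable_def by blast
    then show ?thesis unfolding I_def by (intro bexI[of _ "(st, cf)"]) simp_all
  qed
  ultimately show thesis using that by blast
qed

section \<open>Assembling the homotopy\<close>

lemma measurable_fst_restrict_space: "fst \<in> measurable (restrict_space M S \<Otimes>\<^sub>M N) M"
  using measurable_fst[of "restrict_space M S" N] by (auto simp: measurable_restrict_space2_iff)

definition chain_homotopy ::
  "('a, 'e::euclidean_space, 'b) chain_steps \<Rightarrow> ('a, 'e, 'b) chart \<Rightarrow> ('a \<Rightarrow> 'a) \<Rightarrow> 'a \<times> real \<Rightarrow> 'a" where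
  "chain_homotopy st cf h = (\<lambda>(t, s). chain_path t st cf (h t) (s * (real (length st) + 1)))"

context
  fixes M :: "'a measure" and Top :: "'a topology" and cf :: "('a, 'e::euclidean_space, 'b) chart"
    and st :: "('a, 'e, 'b) chain_steps"
  assumes cf: "nonempty_chart M Top cf" and st: "set st \<subseteq> admissible_steps M Top"
begin

lemma measurable_chain_homotopy:
  assumes "h \<in> measurable (restrict_space M S) M"
  shows "chain_homotopy st cf h \<in> measurable (restrict_space M S \<Otimes>\<^sub>M borel) M"
proof -
  have "(\<lambda>w. h (fst w)) \<in> measurable (restrict_space M S \<Otimes>\<^sub>M borel) M"
    using assms by measurable
  moreover have "(\<lambda>w. snd w * (real (length st) + 1)) \<in> borel_measurable (restrict_space M S \<Otimes>\<^sub>M borel)"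
    by measurable
  ultimately have "(\<lambda>w. chain_path (fst w) st cf (h (fst w)) (snd w * (real (length st) + 1)))
      \<in> measurable (restrict_space M S \<Otimes>\<^sub>M borel) M"
    by (rule measurable_chain_path[OF cf st measurable_fst_restrict_space])
  then show ?thesis by (simp add: chain_homotopy_def case_prod_beta')
qed

context
  fixes t and h :: "'a \<Rightarrow> 'a"
  assumes valid: "valid_chain t st cf (h t)"
begin

lemma continuous_map_chain_homotopy: "continuous_map euclideanreal Top (\<lambda>s. chain_homotopy st cf h (t, s))"
proof -
  have "continuous_map euclideanreal euclideanreal (\<lambda>s. s * (real (length st) + 1))"
    by (intro continuous_intros)
  from continuous_map_compose[OF this continuous_map_chain_path[OF cf valid st]] show ?thesis
    by (simp add: chain_homotopy_def comp_def)
qed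

lemma chain_homotopy_0: "chain_homotopy st cf h (t, 0) = t"
  using chain_path_0[OF cf valid st] by (simp add: chain_homotopy_def)

lemma chain_homotopy_1: "chain_homotopy st cf h (t, 1) = h t"
  using chain_path_length[OF cf valid st] by (simp add: chain_homotopy_def)

end

end

lemma continuous_map_prod_discrete_topology:
  assumes "\<And>t. t \<in> S \<Longrightarrow> continuous_map X Y (\<lambda>s. H (t, s))"
  shows "continuous_map (prod_topology (discrete_topology S) X) Y H"
  unfolding continuous_map_def
proof (intro conjI allI impI)
  show "H \<in> topspace (prod_topology (discrete_topology S) X) \<rightarrow> topspace Y"
    using assms by (force simp: continuous_map_def)
next
  fix U assume U: "openin Y U"
  show "openin (prod_topology (discrete_topology S) X)
      {w \<in> topspace (prod_topology (discrete_topology S) X). H w \<in> U}"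
    unfolding openin_prod_topology_alt
  proof (intro allI impI)
    fix t s assume "(t, s) \<in> {w \<in> topspace (prod_topology (discrete_topology S) X). H w \<in> U}"
    then have t: "t \<in> S" and "s \<in> {x \<in> topspace X. H (t, x) \<in> U}" by auto
    moreover have "openin X {x \<in> topspace X. H (t, x) \<in> U}"
      using openin_continuous_map_preimage[OF assms[OF t] U] .
    moreover have "{t} \<times> {x \<in> topspace X. H (t, x) \<in> U}
        \<subseteq> {w \<in> topspace (prod_topology (discrete_topology S) X). H w \<in> U}"
      using t by auto
    ultimately show "\<exists>V W. openin (discrete_topology S) V \<and> openin X W \<and> t \<in> V \<and> s \<in> W \<and>
        V \<times> W \<subseteq> {w \<in> topspace (prod_topology (discrete_topology S) X). H w \<in> U}"
      by (intro exI[of _ "{t}"] exI[of _ "{x \<in> topspace X. H (t, x) \<in> U}"]) auto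
  qed
qed

text \<open>Taking the first candidate in a fixed enumeration of I keeps the choice measurable.\<close>
definition least_witness :: "'i set \<Rightarrow> ('i \<Rightarrow> 'x \<Rightarrow> bool) \<Rightarrow> 'x \<Rightarrow> 'i" where
  "least_witness I P x = from_nat_into I (LEAST n. P (from_nat_into I n) x)"

lemma least_witness:
  assumes "countable I" "i \<in> I" "P i x"
  shows "least_witness I P x \<in> I" "P (least_witness I P x) x"
proof -
  obtain n where n: "from_nat_into I n = i" using from_nat_into_surj[OF assms(1,2)] by blast
  have "P (from_nat_into I (LEAST n. P (from_nat_into I n) x)) x"
    by (rule LeastI[of _ n]) (simp only: n assms(3))
  then show "P (least_witness I P x) x" by (simp only: least_witness_def)
  show "least_witness I P x \<in> I"
    unfolding least_witness_def using assms(2) by (intro from_nat_into) blast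
qed

lemma measurable_least_witness:
  assumes "countable I" and Q: "\<And>i. i \<in> I \<Longrightarrow> Q i \<in> measurable N M"
    and P: "\<And>i. i \<in> I \<Longrightarrow> {w \<in> space N. P i (f w)} \<in> sets N"
    and witness: "\<And>w. w \<in> space N \<Longrightarrow> \<exists>i\<in>I. P i (f w)"
  shows "(\<lambda>w. Q (least_witness I P (f w)) w) \<in> measurable N M"
proof (cases "I = {}")
  case True
  then have "space N = {}" using witness by blast
  then show ?thesis by (simp add: measurable_def)
next
  case False
  then have "(\<lambda>w. Q (from_nat_into I n) w) \<in> measurable N M" for n
    using Q[OF from_nat_into[OF False]] by simp
  moreover have "(\<lambda>w. LEAST n. P (from_nat_into I n) (f w)) \<in> measurable N (count_space UNIV)"
    using P[OF from_nat_into[OF False]] by (intro measurable_Least) (simp only: pred_def)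
  ultimately show ?thesis
    unfolding least_witness_def by (rule measurable_compose_countable)
qed

lemma leafwise_homotopy_exists:
  fixes I :: "(('a, 'e::euclidean_space, 'b) chain_steps \<times> ('a, 'e, 'b) chart) set"
  assumes "countable I"
    and I: "\<And>st cf. (st, cf) \<in> I \<Longrightarrow> nonempty_chart M Top cf \<and> set st \<subseteq> admissible_steps M Top"
    and h: "h \<in> measurable (restrict_space M S) M"
    and chains: "\<And>t. t \<in> S \<Longrightarrow> \<exists>(st, cf)\<in>I. valid_chain t st cf (h t)"
  shows "\<exists>H. measurable_homotopy M Top S H \<and> (\<forall>t\<in>S. H (t, 0) = t \<and> H (t, 1) = h t)"
proof -
  define P :: "('a, 'e, 'b) chain_steps \<times> ('a, 'e, 'b) chart \<Rightarrow> 'a \<Rightarrow> bool"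
    where "P = (\<lambda>(st, cf) t. valid_chain t st cf (h t))"
  have witness: "\<exists>i\<in>I. P i t" if "t \<in> S" for t
    using chains[OF that] unfolding P_def by blast
  have h_fst: "(\<lambda>w. h (fst w)) \<in> measurable (restrict_space M S \<Otimes>\<^sub>M borel) M"
    using h by measurable
  define H where "H w = case_prod chain_homotopy (least_witness I P (fst w)) h w" for w
  have meas: "H \<in> measurable (restrict_space M S \<Otimes>\<^sub>M borel) M"
    unfolding H_def
  proof (rule measurable_least_witness[OF \<open>countable I\<close>])
    fix i assume "i \<in> I"
    obtain st cf where i: "i = (st, cf)" by (cases i)
    then have cf: "nonempty_chart M Top cf" and st: "set st \<subseteq> admissible_steps M Top"
      using I[of st cf] \<open>i \<in> I\<close> by simp_all
    show "case_prod chain_homotopy i h \<in> measurable (restrict_space M S \<Otimes>\<^sub>M borel) M"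
      using measurable_chain_homotopy[OF cf st h] by (simp add: i)
    show "{w \<in> space (restrict_space M S \<Otimes>\<^sub>M borel). P i (fst w)} \<in> sets (restrict_space M S \<Otimes>\<^sub>M borel)"
      using sets_valid_chain[OF cf st measurable_fst_restrict_space h_fst] by (simp add: i P_def)
  next
    fix w assume "w \<in> space (restrict_space M S \<Otimes>\<^sub>M borel)"
    then have "fst w \<in> S" by (simp add: space_pair_measure space_restrict_space mem_Times_iff)
    then show "\<exists>i\<in>I. P i (fst w)" using witness by blast
  qed
  have slice: "continuous_map euclideanreal Top (\<lambda>s. H (t, s)) \<and> H (t, 0) = t \<and> H (t, 1) = h t"
    if "t \<in> S" for t
  proof -
    obtain st cf where i: "least_witness I P t = (st, cf)" by (cases "least_witness I P t")
    then have "(st, cf) \<in> I" and valid: "valid_chain t st cf (h t)"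
      using least_witness[OF \<open>countable I\<close>, of _ P t] witness[OF that] by (auto simp: P_def)
    then have cf: "nonempty_chart M Top cf" and st: "set st \<subseteq> admissible_steps M Top"
      using I by simp_all
    show ?thesis
      using continuous_map_chain_homotopy[where h=h, OF cf st valid] chain_homotopy_0[where h=h, OF cf st valid]
        chain_homotopy_1[where h=h, OF cf st valid]
      by (simp add: H_def i)
  qed
  have "continuous_map (prod_topology (discrete_topology S) euclideanreal) Top H"
    using slice by (simp add: continuous_map_prod_discrete_topology)
  with meas slice show ?thesis unfolding measurable_homotopy_def by (intro exI[of _ H]) simp
qed

lemma measurable_lamination_nonempty_atlas:
  assumes "measurable_lamination M Top TYPE('e \<times> 'b)"
  obtains A :: "('a, 'e::euclidean_space, 'b) chart set"
  where "countable A" "\<And>c. c \<in> A \<Longrightarrow> nonempty_chart M Top c"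
    "topspace Top \<subseteq> (\<Union>c\<in>A. chart_dom c)" "space M = topspace Top"
proof -
  obtain A :: "('a, 'e, 'b) chart set" where A: "countable A" "fol_atlas M Top A"
    and MT: "space M = topspace Top"
    using assms unfolding measurable_lamination_def MT_space_def by blast
  define A' where "A' = {c \<in> A. chart_dom c \<noteq> {}}"
  have "countable A'" unfolding A'_def using A(1) by (rule countable_subset[rotated]) auto
  moreover have "nonempty_chart M Top c" if "c \<in> A'" for c
    using that A(2) unfolding A'_def fol_atlas_def nonempty_chart_def by blast
  moreover have "topspace Top \<subseteq> (\<Union>c\<in>A'. chart_dom c)"
    using A(2) MT unfolding A'_def fol_atlas_def chart_dom_def by blast
  ultimately show thesis using that MT by blast
qed

theorem mainTheorem8:
  fixes M :: "'a measure" and Top :: "'a topology"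
    and A :: "('a, 'e::euclidean_space, 'b) chart set"
    and S S' :: "'a set" and h :: "'a \<Rightarrow> 'a"
  assumes "measurable_lamination M Top TYPE('e \<times> 'b)"
    and "regular_atlas M Top A"
    and "measurable_holonomy_map M Top S S' h"
  shows "\<exists>H. measurable_homotopy M Top S H \<and>
             (\<forall>t\<in>S. H (t, 0) = t \<and> H (t, 1) = h t)"
proof -
  obtain A' :: "('a, 'e, 'b) chart set" where atlas: "countable A'"
    "\<And>c. c \<in> A' \<Longrightarrow> nonempty_chart M Top c" "topspace Top \<subseteq> (\<Union>c\<in>A'. chart_dom c)"
    and MT: "space M = topspace Top"
    using measurable_lamination_nonempty_atlas[OF assms(1)] by blast
  obtain I :: "(('a, 'e, 'b) chain_steps \<times> ('a, 'e, 'b) chart) set" where I: "countable I"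
    "\<And>st cf. (st, cf) \<in> I \<Longrightarrow> nonempty_chart M Top cf \<and> set st \<subseteq> admissible_steps M Top"
    and sweep: "\<And>t y. t \<in> topspace Top \<Longrightarrow> y \<in> connected_component_of_set Top t \<Longrightarrow>
      \<exists>(st, cf)\<in>I. valid_chain t st cf y"
    using countable_chains_sweep_leaves[OF atlas] by blast
  have "S \<subseteq> topspace Top" and h: "h \<in> measurable (restrict_space M S) M"
    and "\<And>t. t \<in> S \<Longrightarrow> h t \<in> connected_component_of_set Top t"
    using assms(3) sets.sets_into_space MT
    by (auto simp: measurable_holonomy_map_def transversal_def measurable_restrict_space2_iff)
  then show ?thesis
    using leafwise_homotopy_exists[OF I h] sweep by blast
qed
end
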